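(* Let $t$ be a positive integer not divisible by $3$. Then the average size of a $(3,t)$-core is $\frac{(t+4)\cdot 2\cdot (t-1)}{24}=\frac{(t+4)(t-1)}{12}$. Equivalently, the sum of the sizes of all $(3,t)$-cores equals $$\frac{(t+4)\cdot 2\cdot (t-1)}{24(t+3)}\binom{t+3}{3}.$$
   Context: A partition $\lambda=(\lambda_1,\dots,\lambda_m)$ is a weakly decreasing sequence of positive integers. Its size is $\lambda_1+\dots+\lambda_m$. The hook length of a cell $B$ of the Young diagram is the number of cells directly to the right of $B$ in its row or directly below $B$ in its column, including $B$ itself. $\lambda$ is an $s$-core if no cell has hook length equal to $s$. An $(s,t)$-core is a partition that is both an $s$-core and a $t$-core. For coprime $s,t$ there are exactly $\binom{s+t}{s}/(s+t)$ $(s,t)$-cores, so in particular finitely many. *)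

theory Defs
  imports Complex_Main
begin

text \<open>A partition is represented as a list of positive naturals in weakly decreasing order.
  Rows and columns are indexed from 0.\<close>

definition is_partition :: "nat list \<Rightarrow> bool" where
  "is_partition la \<longleftrightarrow> sorted (rev la) \<and> (\<forall>x\<in>set la. 0 < x)"

definition psize :: "nat list \<Rightarrow> nat" where
  "psize la = sum_list la"

definition cells :: "nat list \<Rightarrow> (nat \<times> nat) set" where
  "cells la = {(i, j). i < length la \<and> j < la ! i}"

definition col_len :: "nat list \<Rightarrow> nat \<Rightarrow> nat" where
  "col_len la j = card {i. i < length la \<and> j < la ! i}"

text \<open>Hook length of a cell: cells to the right in its row, cells below in its column, plus itself.\<close>
definition hook :: "nat list \<Rightarrow> nat \<times> nat \<Rightarrow> nat" where
  "hook la c = (la ! fst c - snd c - 1) + (col_len la (snd c) - fst c - 1) + 1"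

definition is_core :: "nat \<Rightarrow> nat list \<Rightarrow> bool" where
  "is_core s la \<longleftrightarrow> is_partition la \<and> (\<forall>c\<in>cells la. hook la c \<noteq> s)"

definition cores2 :: "nat \<Rightarrow> nat \<Rightarrow> nat list set" where
  "cores2 s t = {la. is_core s la \<and> is_core t la}"

end

theory Submission
  imports Defs
begin

text \<open>A partition is determined by its beta-set, the set of hook lengths of its first column, and
  it is an \<open>s\<close>-core exactly when this set is closed under subtracting \<open>s\<close>. Closure under
  subtracting 3 forces the beta-set to be \<open>{1, 4, \<dots>, 3a - 2} \<union> {2, 5, \<dots>, 3b - 1}\<close>, and then
  the size is \<open>a\<^sup>2 - ab + b\<^sup>2 + b\<close>. For \<open>t = 3k + 1\<close> (resp. \<open>3k + 2\<close>) closure under subtracting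
  \<open>t\<close> cuts out the region \<open>a \<le> k, b \<le> a + k\<close> (resp. \<open>b \<le> k, a \<le> b + k + 1\<close>); summing over it
  gives \<open>(t + 1)(t + 2)/6\<close> cores of total size \<open>(t + 4)(t - 1)(t + 1)(t + 2)/72\<close>.\<close>

lemma is_partition_Cons:
  "is_partition (x # mu) \<longleftrightarrow> is_partition mu \<and> 0 < x \<and> (\<forall>y\<in>set mu. y \<le> x)"
  unfolding is_partition_def by (auto simp: sorted_append)

lemma is_partition_nth_antimono:
  "is_partition mu \<Longrightarrow> i \<le> i' \<Longrightarrow> i' < length mu \<Longrightarrow> mu ! i' \<le> mu ! i"
  unfolding is_partition_def by (auto intro: sorted_rev_nth_mono)

lemma col_len_le_length: "col_len mu j \<le> length mu"
  unfolding col_len_def by (rule order_trans[OF card_mono[of "{..<length mu}"]]) auto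

lemma col_len_antimono: "j \<le> j' \<Longrightarrow> col_len mu j' \<le> col_len mu j"
  unfolding col_len_def by (rule card_mono) auto

lemma col_len_ge:
  assumes "is_partition mu" "i < length mu" "j < mu ! i"
  shows "Suc i \<le> col_len mu j"
proof -
  have "{..i} \<subseteq> {i. i < length mu \<and> j < mu ! i}"
    using assms is_partition_nth_antimono[OF assms(1)] by (auto intro: less_le_trans)
  from card_mono[OF _ this] show ?thesis unfolding col_len_def by simp
qed

lemma col_len_le:
  assumes "is_partition mu" "i < length mu" "mu ! i \<le> j"
  shows "col_len mu j \<le> i"
proof -
  have "{i. i < length mu \<and> j < mu ! i} \<subseteq> {..<i}"
  proof
    fix i' assume "i' \<in> {i. i < length mu \<and> j < mu ! i}"
    then have "\<not> i \<le> i'" using is_partition_nth_antimono[OF assms(1), of i i'] assms(3) by auto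
    then show "i' \<in> {..<i}" by simp
  qed
  from card_mono[OF _ this] show ?thesis unfolding col_len_def by simp
qed

lemma col_len_Cons: "j < x \<Longrightarrow> col_len (x # mu) j = Suc (col_len mu j)"
proof -
  assume "j < x"
  then have "{i. i < length (x # mu) \<and> j < (x # mu) ! i}
      = insert 0 (Suc ` {i. i < length mu \<and> j < mu ! i})"
    by (auto simp: nth_Cons split: nat.splits)
      (metis Suc_less_eq image_eqI mem_Collect_eq not0_implies_Suc)
  then show ?thesis unfolding col_len_def by (simp add: card_image)
qed

lemma cells_Cons: "cells (x # mu) = {(0, j) | j. j < x} \<union> (\<lambda>(i, j). (Suc i, j)) ` cells mu"
  unfolding cells_def by (auto simp: nth_Cons split: nat.splits)

lemma hook_Cons_0: "j < x \<Longrightarrow> hook (x # mu) (0, j) = x - j + col_len mu j"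
  unfolding hook_def by (simp add: col_len_Cons)

lemma hook_Cons_Suc:
  assumes "is_partition (x # mu)" "(i, j) \<in> cells mu"
  shows "hook (x # mu) (Suc i, j) = hook mu (i, j)"
proof -
  have "i < length mu" "j < mu ! i" using assms(2) by (auto simp: cells_def)
  moreover have "mu ! i \<le> x"
    using assms(1) nth_mem[OF \<open>i < length mu\<close>] by (simp add: is_partition_Cons)
  ultimately have "j < x" by simp
  then show ?thesis unfolding hook_def by (simp add: col_len_Cons)
qed

section \<open>Beta-sets\<close>

text \<open>Entry \<open>i\<close> of \<open>beta_list la\<close> is \<open>la ! i + (length la - 1 - i)\<close>, the hook length of
  the cell \<open>(i, 0)\<close>.\<close>

fun beta_list :: "nat list \<Rightarrow> nat list" where
  "beta_list [] = []"
| "beta_list (x # xs) = (x + length xs) # beta_list xs"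

definition beta_set :: "nat list \<Rightarrow> nat set" where
  "beta_set la = set (beta_list la)"

lemma length_beta_list [simp]: "length (beta_list la) = length la"
  by (induction la) auto

lemma beta_set_Cons: "beta_set (x # mu) = insert (x + length mu) (beta_set mu)"
  by (simp add: beta_set_def)

lemma beta_list_nth: "i < length la \<Longrightarrow> beta_list la ! i = la ! i + (length la - 1 - i)"
  by (induction la arbitrary: i) (auto simp: nth_Cons split: nat.split)

lemma beta_set_conv_nth: "beta_set la = (\<lambda>i. la ! i + (length la - 1 - i)) ` {..<length la}"
proof -
  have "set (beta_list la) = (\<lambda>i. beta_list la ! i) ` {..<length la}"
    by (auto simp: in_set_conv_nth)
  then show ?thesis unfolding beta_set_def by (simp add: beta_list_nth)
qed

lemma beta_set_less: "\<forall>y\<in>set mu. y \<le> x \<Longrightarrow> h \<in> beta_set mu \<Longrightarrow> h < x + length mu"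
proof (induction mu)
  case (Cons z zs)
  then consider "h = z + length zs" "z \<le> x" | "h \<in> beta_set zs"
    by (auto simp: beta_set_Cons)
  then show ?case using Cons by cases auto
qed (simp add: beta_set_def)

lemma sorted_beta_list: "is_partition la \<Longrightarrow> sorted_wrt (>) (beta_list la)"
proof (induction la)
  case (Cons x mu)
  then have "\<forall>h\<in>set (beta_list mu). h < x + length mu"
    using beta_set_less[of mu x] by (auto simp: is_partition_Cons beta_set_def)
  then show ?case using Cons by (simp add: is_partition_Cons)
qed simp

lemma zero_notin_beta_set: "is_partition la \<Longrightarrow> 0 \<notin> beta_set la"
  by (induction la) (auto simp: is_partition_Cons beta_set_Cons beta_set_def)

lemma distinct_beta_list: "is_partition la \<Longrightarrow> distinct (beta_list la)"
proof -
  assume "is_partition la"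
  then have "sorted_wrt (<) (rev (beta_list la))" by (simp add: sorted_wrt_rev sorted_beta_list)
  then show ?thesis by (simp add: strict_sorted_iff)
qed

lemma card_beta_set: "is_partition la \<Longrightarrow> card (beta_set la) = length la"
  unfolding beta_set_def by (simp add: distinct_card distinct_beta_list)

text \<open>The first-row hooks of \<open>x # mu\<close> are the numbers \<open>x + length mu - g\<close>, where \<open>g\<close> ranges
  over the gaps of \<open>beta_set mu\<close> below \<open>x + length mu\<close>; the gap belonging to column \<open>j\<close> is
  \<open>length mu + j - col_len mu j\<close>.\<close>

lemma col_gap_notin_beta_set:
  assumes "is_partition mu"
  shows "length mu + j - col_len mu j \<notin> beta_set mu"
proof
  assume "length mu + j - col_len mu j \<in> beta_set mu"
  then obtain i where i: "i < length mu"
    and eq: "length mu + j - col_len mu j = mu ! i + (length mu - 1 - i)"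
    unfolding beta_set_conv_nth by auto
  show False
  proof (cases "j < mu ! i")
    case True
    then show False using col_len_ge[OF assms i True] col_len_le_length[of mu j] eq i by linarith
  next
    case False
    then have "col_len mu j \<le> i" using col_len_le[OF assms i] by simp
    then show False using False eq i by linarith
  qed
qed

lemma strict_mono_col_gap: "strict_mono (\<lambda>j. length mu + j - col_len mu j)"
proof (rule strict_monoI)
  fix j j' :: nat assume "j < j'"
  then show "length mu + j - col_len mu j < length mu + j' - col_len mu j'"
    using col_len_antimono[of j j' mu] col_len_le_length[of mu j] by linarith
qed

lemma col_gaps_eq:
  assumes "is_partition (x # mu)"
  shows "(\<lambda>j. length mu + j - col_len mu j) ` {..<x} = {..<x + length mu} - beta_set mu"
proof (rule card_subset_eq)
  have pm: "is_partition mu" and bound: "\<forall>y\<in>set mu. y \<le> x"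
    using assms by (auto simp: is_partition_Cons)
  have "beta_set mu \<subseteq> {..<x + length mu}" using beta_set_less[OF bound] by auto
  then have "card ({..<x + length mu} - beta_set mu) = x"
    by (simp add: card_Diff_subset card_beta_set[OF pm] finite_subset)
  also have "x = card ((\<lambda>j. length mu + j - col_len mu j) ` {..<x})"
    using strict_mono_imp_inj_on[OF strict_mono_col_gap] by (simp add: card_image)
  finally show "card ((\<lambda>j. length mu + j - col_len mu j) ` {..<x})
      = card ({..<x + length mu} - beta_set mu)" ..
  show "(\<lambda>j. length mu + j - col_len mu j) ` {..<x} \<subseteq> {..<x + length mu} - beta_set mu"
    using col_gap_notin_beta_set[OF pm] by auto
qed simp

lemma first_row_hook_iff:
  assumes "is_partition (x # mu)" "0 < s"
  shows "(\<exists>j<x. hook (x # mu) (0, j) = s)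
    \<longleftrightarrow> s \<le> x + length mu \<and> x + length mu - s \<notin> beta_set mu"
proof -
  have "hook (x # mu) (0, j) = s
      \<longleftrightarrow> s \<le> x + length mu \<and> x + length mu - s = length mu + j - col_len mu j" if "j < x" for j
    using that col_len_le_length[of mu j] by (auto simp: hook_Cons_0)
  then have "(\<exists>j<x. hook (x # mu) (0, j) = s) \<longleftrightarrow>
      s \<le> x + length mu \<and> x + length mu - s \<in> (\<lambda>j. length mu + j - col_len mu j) ` {..<x}"
    by auto
  then show ?thesis unfolding col_gaps_eq[OF assms(1)] using assms(2) by auto
qed

definition closed_minus :: "nat \<Rightarrow> nat set \<Rightarrow> bool" where
  "closed_minus s H \<longleftrightarrow> (\<forall>h\<in>H. s \<le> h \<longrightarrow> h - s \<in> H)"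

lemma closed_minus_insert_above:
  assumes "\<forall>h\<in>H. h < N" "0 < s"
  shows "closed_minus s (insert N H) \<longleftrightarrow> closed_minus s H \<and> (s \<le> N \<longrightarrow> N - s \<in> H)"
proof -
  have "h - s \<noteq> N" if "h \<in> H" for h using assms(1) that by fastforce
  then show ?thesis unfolding closed_minus_def using assms(2) by auto
qed

lemma is_core_Cons:
  assumes "is_partition (x # mu)" "0 < s"
  shows "is_core s (x # mu) \<longleftrightarrow>
    is_core s mu \<and> (s \<le> x + length mu \<longrightarrow> x + length mu - s \<in> beta_set mu)"
proof -
  have "(\<forall>c\<in>cells (x # mu). hook (x # mu) c \<noteq> s) \<longleftrightarrow>
      \<not> (\<exists>j<x. hook (x # mu) (0, j) = s) \<and> (\<forall>c\<in>cells mu. hook (x # mu) (Suc (fst c), snd c) \<noteq> s)"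
    unfolding cells_Cons by auto
  also have "\<dots> \<longleftrightarrow> \<not> (\<exists>j<x. hook (x # mu) (0, j) = s) \<and> (\<forall>c\<in>cells mu. hook mu c \<noteq> s)"
    using hook_Cons_Suc[OF assms(1)] by auto
  finally have "is_core s (x # mu) \<longleftrightarrow>
      \<not> (\<exists>j<x. hook (x # mu) (0, j) = s) \<and> (\<forall>c\<in>cells mu. hook mu c \<noteq> s)"
    using assms(1) unfolding is_core_def by simp
  then show ?thesis
    using first_row_hook_iff[OF assms] assms(1) by (auto simp: is_core_def is_partition_Cons)
qed

lemma is_core_iff_closed_minus:
  assumes "is_partition la" "0 < s"
  shows "is_core s la \<longleftrightarrow> closed_minus s (beta_set la)"
  using assms(1)
proof (induction la)
  case Nil
  then show ?case by (simp add: is_core_def cells_def closed_minus_def beta_set_def)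
next
  case (Cons x mu)
  have pm: "is_partition mu" using Cons.prems by (simp add: is_partition_Cons)
  have "\<forall>h\<in>beta_set mu. h < x + length mu"
    using beta_set_less Cons.prems by (auto simp: is_partition_Cons)
  then show ?case
    using is_core_Cons[OF Cons.prems assms(2)] Cons.IH[OF pm] closed_minus_insert_above assms(2)
    by (simp add: beta_set_Cons)
qed

fun partition_of_beta_list :: "nat list \<Rightarrow> nat list" where
  "partition_of_beta_list [] = []"
| "partition_of_beta_list (h # hs) = (h - length hs) # partition_of_beta_list hs"

lemma partition_of_beta_list_beta_list [simp]: "partition_of_beta_list (beta_list la) = la"
  by (induction la) auto

lemma length_partition_of_beta_list [simp]:
  "length (partition_of_beta_list hs) = length hs"
  by (induction hs) auto

lemma length_less_head:
  "sorted_wrt (>) (h # hs) \<Longrightarrow> 0 \<notin> set (h # hs) \<Longrightarrow> length hs < h"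
proof (induction hs arbitrary: h)
  case (Cons h' hs)
  then show ?case by fastforce
qed simp

lemma beta_list_partition_of_beta_list:
  "sorted_wrt (>) hs \<Longrightarrow> 0 \<notin> set hs \<Longrightarrow> beta_list (partition_of_beta_list hs) = hs"
proof (induction hs)
  case (Cons h hs)
  then show ?case using length_less_head[OF Cons.prems] by simp
qed simp

lemma partition_of_beta_list_bound:
  "sorted_wrt (>) hs \<Longrightarrow> 0 \<notin> set hs \<Longrightarrow> \<forall>h\<in>set hs. h < c \<Longrightarrow>
    \<forall>y\<in>set (partition_of_beta_list hs). y + length hs \<le> c"
proof (induction hs arbitrary: c)
  case (Cons h hs)
  then have "\<forall>y\<in>set (partition_of_beta_list hs). y + length hs \<le> h" by auto
  then show ?case using Cons.prems length_less_head[OF Cons.prems(1,2)] by fastforce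
qed simp

lemma is_partition_partition_of_beta_list:
  "sorted_wrt (>) hs \<Longrightarrow> 0 \<notin> set hs \<Longrightarrow> is_partition (partition_of_beta_list hs)"
proof (induction hs)
  case Nil
  then show ?case by (simp add: is_partition_def)
next
  case (Cons h hs)
  have "\<forall>y\<in>set (partition_of_beta_list hs). y + length hs \<le> h"
    using partition_of_beta_list_bound Cons.prems by auto
  then show ?case
    using Cons length_less_head[OF Cons.prems] by (fastforce simp: is_partition_Cons)
qed

lemma beta_set_inject:
  assumes "is_partition la" "is_partition la'" "beta_set la = beta_set la'"
  shows "la = la'"
proof -
  have "rev (beta_list la) = rev (beta_list la')"
    using assms sorted_beta_list
    by (intro strict_sorted_equal) (auto simp: sorted_wrt_rev beta_set_def)
  then show ?thesis by (metis rev_rev_ident partition_of_beta_list_beta_list)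
qed

lemma beta_set_surj:
  assumes "finite H" "0 \<notin> H"
  obtains la where "is_partition la" "beta_set la = H"
proof
  let ?hs = "rev (sorted_list_of_set H)"
  have hs: "sorted_wrt (>) ?hs" "0 \<notin> set ?hs"
    using assms by (simp_all add: sorted_wrt_rev strict_sorted_list_of_set)
  show "is_partition (partition_of_beta_list ?hs)"
    using is_partition_partition_of_beta_list[OF hs] .
  show "beta_set (partition_of_beta_list ?hs) = H"
    unfolding beta_set_def beta_list_partition_of_beta_list[OF hs] using assms by simp
qed

lemma psize_beta_list:
  "2 * psize la + length la * length la = 2 * sum_list (beta_list la) + length la"
  by (induction la) (auto simp: psize_def algebra_simps)

lemma psize_beta_set:
  assumes "is_partition la"
  shows "2 * psize la + card (beta_set la) * card (beta_set la)
    = 2 * \<Sum>(beta_set la) + card (beta_set la)"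
  using psize_beta_list[of la] card_beta_set[OF assms] distinct_beta_list[OF assms]
  by (simp add: beta_set_def distinct_sum_list_conv_Sum)

section \<open>3-cores\<close>

text \<open>The beta-set of the 3-core with \<open>a\<close> beads on runner 1 and \<open>b\<close> beads on runner 2 of the
  3-abacus.\<close>

definition abacus3 :: "nat \<Rightarrow> nat \<Rightarrow> nat set" where
  "abacus3 a b = (\<lambda>q. 3 * q + 1) ` {..<a} \<union> (\<lambda>q. 3 * q + 2) ` {..<b}"

lemma abacus3_mod1_iff: "3 * q + 1 \<in> abacus3 a b \<longleftrightarrow> q < a"
  unfolding abacus3_def by auto presburger

lemma abacus3_mod2_iff: "3 * q + 2 \<in> abacus3 a b \<longleftrightarrow> q < b"
  unfolding abacus3_def by auto presburger

lemma abacus3_mod0: "3 * q \<notin> abacus3 a b"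
  unfolding abacus3_def by auto presburger+

lemma mem_abacus3E:
  assumes "h \<in> abacus3 a b"
  obtains q where "q < a" "h = 3 * q + 1" | q where "q < b" "h = 3 * q + 2"
  using assms unfolding abacus3_def by auto

lemma finite_abacus3: "finite (abacus3 a b)"
  unfolding abacus3_def by simp

lemma zero_notin_abacus3: "0 \<notin> abacus3 a b"
  using abacus3_mod0[of 0] by simp

lemma closed_minus_3_abacus3: "closed_minus 3 (abacus3 a b)"
  unfolding closed_minus_def
proof (intro ballI impI)
  fix h assume "h \<in> abacus3 a b" "3 \<le> h"
  then show "h - 3 \<in> abacus3 a b"
  proof (cases rule: mem_abacus3E)
    case (1 q)
    then have "h - 3 = 3 * (q - 1) + 1" "q - 1 < a" using \<open>3 \<le> h\<close> by auto
    then show ?thesis by (simp only: abacus3_mod1_iff)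
  next
    case (2 q)
    then have "h - 3 = 3 * (q - 1) + 2" "q - 1 < b" using \<open>3 \<le> h\<close> by auto
    then show ?thesis by (simp only: abacus3_mod2_iff)
  qed
qed

lemma closed_minus_abacus3_mod1:
  "closed_minus (3 * k + 1) (abacus3 a b) \<longleftrightarrow> a \<le> k \<and> b \<le> a + k"
proof
  assume closed: "closed_minus (3 * k + 1) (abacus3 a b)"
  have "\<not> k < a"
  proof
    assume "k < a"
    then have "3 * k + 1 \<in> abacus3 a b" by (simp only: abacus3_mod1_iff)
    then have "3 * k + 1 - (3 * k + 1) \<in> abacus3 a b"
      using closed unfolding closed_minus_def by blast
    then show False using zero_notin_abacus3 by simp
  qed
  moreover have "\<not> a + k < b"
  proof
    assume "a + k < b"
    then have "3 * (a + k) + 2 \<in> abacus3 a b" by (simp only: abacus3_mod2_iff)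
    moreover have "3 * k + 1 \<le> 3 * (a + k) + 2" by simp
    ultimately have "3 * (a + k) + 2 - (3 * k + 1) \<in> abacus3 a b"
      using closed unfolding closed_minus_def by blast
    moreover have "3 * (a + k) + 2 - (3 * k + 1) = 3 * a + 1" by simp
    ultimately show False using abacus3_mod1_iff[of a a b] by simp
  qed
  ultimately show "a \<le> k \<and> b \<le> a + k" by simp
next
  assume bounds: "a \<le> k \<and> b \<le> a + k"
  show "closed_minus (3 * k + 1) (abacus3 a b)"
    unfolding closed_minus_def
  proof (intro ballI impI)
    fix h assume "h \<in> abacus3 a b" and le: "3 * k + 1 \<le> h"
    then show "h - (3 * k + 1) \<in> abacus3 a b"
    proof (cases rule: mem_abacus3E)
      case (1 q)
      then show ?thesis using le bounds by linarith
    next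
      case (2 q)
      then have "h - (3 * k + 1) = 3 * (q - k) + 1" "q - k < a" using le bounds by linarith+
      then show ?thesis by (simp only: abacus3_mod1_iff)
    qed
  qed
qed

lemma closed_minus_abacus3_mod2:
  "closed_minus (3 * k + 2) (abacus3 a b) \<longleftrightarrow> b \<le> k \<and> a \<le> b + k + 1"
proof
  assume closed: "closed_minus (3 * k + 2) (abacus3 a b)"
  have "\<not> k < b"
  proof
    assume "k < b"
    then have "3 * k + 2 \<in> abacus3 a b" by (simp only: abacus3_mod2_iff)
    then have "3 * k + 2 - (3 * k + 2) \<in> abacus3 a b"
      using closed unfolding closed_minus_def by blast
    then show False using zero_notin_abacus3 by simp
  qed
  moreover have "\<not> b + k + 1 < a"
  proof
    assume "b + k + 1 < a"
    then have "3 * (b + k + 1) + 1 \<in> abacus3 a b" by (simp only: abacus3_mod1_iff)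
    moreover have "3 * k + 2 \<le> 3 * (b + k + 1) + 1" by simp
    ultimately have "3 * (b + k + 1) + 1 - (3 * k + 2) \<in> abacus3 a b"
      using closed unfolding closed_minus_def by blast
    moreover have "3 * (b + k + 1) + 1 - (3 * k + 2) = 3 * b + 2" by simp
    ultimately show False using abacus3_mod2_iff[of b a b] by simp
  qed
  ultimately show "b \<le> k \<and> a \<le> b + k + 1" by simp
next
  assume bounds: "b \<le> k \<and> a \<le> b + k + 1"
  show "closed_minus (3 * k + 2) (abacus3 a b)"
    unfolding closed_minus_def
  proof (intro ballI impI)
    fix h assume "h \<in> abacus3 a b" and le: "3 * k + 2 \<le> h"
    then show "h - (3 * k + 2) \<in> abacus3 a b"
    proof (cases rule: mem_abacus3E)
      case (1 q)
      then have "h - (3 * k + 2) = 3 * (q - k - 1) + 2" "q - k - 1 < b" using le bounds by linarith+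
      then show ?thesis by (simp only: abacus3_mod2_iff)
    next
      case (2 q)
      then show ?thesis using le bounds by linarith
    qed
  qed
qed

lemma down_closed_eq_lessThan_card:
  assumes "finite I" "\<And>q. Suc q \<in> I \<Longrightarrow> q \<in> I"
  shows "I = {..<card I}"
proof -
  have down: "p \<in> I" if "q \<in> I" "p \<le> q" for p q
    using that(2,1) by (induction rule: dec_induct) (auto intro: assms(2))
  have "q < card I" if "q \<in> I" for q
    using card_mono[OF assms(1), of "{..q}"] down[OF that] by fastforce
  moreover have "p \<in> I" if "p < card I" for p
  proof (rule ccontr)
    assume "p \<notin> I"
    have "I \<subseteq> {..<p}"
    proof
      fix q assume "q \<in> I"
      then show "q \<in> {..<p}" using down[of q p] \<open>p \<notin> I\<close> by (cases "p \<le> q") auto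
    qed
    then show False using card_mono[of "{..<p}" I] that by simp
  qed
  ultimately show ?thesis by auto
qed

lemma closed_minus_3_eq_abacus3:
  assumes "finite H" "0 \<notin> H" "closed_minus 3 H"
  obtains a b where "H = abacus3 a b"
proof
  have step: "h - 3 \<in> H" if "h \<in> H" "3 \<le> h" for h
    using assms(3) that unfolding closed_minus_def by blast
  define I1 where "I1 = (\<lambda>q. 3 * q + 1) -` H"
  define I2 where "I2 = (\<lambda>q. 3 * q + 2) -` H"
  have I1: "I1 = {..<card I1}" unfolding I1_def
    using assms(1) step[of "3 * Suc _ + 1"] by (intro down_closed_eq_lessThan_card)
      (auto intro: finite_vimageI simp: inj_on_def)
  have I2: "I2 = {..<card I2}" unfolding I2_def
    using assms(1) step[of "3 * Suc _ + 2"] by (intro down_closed_eq_lessThan_card)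
      (auto intro: finite_vimageI simp: inj_on_def)
  have no_mod0: "3 * q \<notin> H" for q
    by (induction q) (use assms(2) step[of "3 * Suc _"] in auto)
  show "H = abacus3 (card I1) (card I2)"
  proof (intro equalityI subsetI)
    fix h assume h: "h \<in> H"
    have "h = 3 * (h div 3) + h mod 3" by simp
    moreover have "h mod 3 = 0 \<or> h mod 3 = 1 \<or> h mod 3 = 2" by linarith
    ultimately consider "h = 3 * (h div 3)" | "h = 3 * (h div 3) + 1" | "h = 3 * (h div 3) + 2"
      by fastforce
    then show "h \<in> abacus3 (card I1) (card I2)"
    proof cases
      case 1
      then show ?thesis using no_mod0 h by metis
    next
      case 2
      then have "h div 3 \<in> I1" unfolding I1_def using h by (metis vimage_eq)
      then show ?thesis using 2 I1 abacus3_mod1_iff by (metis lessThan_iff)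
    next
      case 3
      then have "h div 3 \<in> I2" unfolding I2_def using h by (metis vimage_eq)
      then show ?thesis using 3 I2 abacus3_mod2_iff by (metis lessThan_iff)
    qed
  next
    fix h assume "h \<in> abacus3 (card I1) (card I2)"
    then show "h \<in> H"
      by (cases rule: mem_abacus3E) (use I1 I2 in \<open>auto simp: I1_def I2_def\<close>)
  qed
qed

lemma card_sum_abacus3:
  "card (abacus3 a b) = a + b" "2 * \<Sum>(abacus3 a b) + a = 3 * a * a + 3 * b * b + b"
proof -
  have disj: "(\<lambda>q. 3 * q + 1) ` {..<a} \<inter> (\<lambda>q. 3 * q + 2) ` {..<b} = {}" by auto presburger
  have inj1: "inj (\<lambda>q::nat. 3 * q + 1)" and inj2: "inj (\<lambda>q::nat. 3 * q + 2)"
    by (auto simp: inj_on_def)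
  show "card (abacus3 a b) = a + b" unfolding abacus3_def
    using card_Un_disjoint[OF _ _ disj] card_image[OF inj_on_subset[OF inj1]]
      card_image[OF inj_on_subset[OF inj2]] by simp
  have "\<Sum>(abacus3 a b) = \<Sum>((\<lambda>q. 3 * q + 1) ` {..<a}) + \<Sum>((\<lambda>q. 3 * q + 2) ` {..<b})"
    unfolding abacus3_def by (rule sum.union_disjoint) (use disj in auto)
  also have "\<dots> = (\<Sum>q<a. 3 * q + 1) + (\<Sum>q<b. 3 * q + 2)"
    using sum.reindex[OF inj_on_subset[OF inj1], of "{..<a}" id]
      sum.reindex[OF inj_on_subset[OF inj2], of "{..<b}" id] by simp
  moreover have "2 * (\<Sum>q<n. 3 * q + 1) + n = 3 * n * n" for n :: nat
    by (induction n) (auto simp: algebra_simps)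
  moreover have "2 * (\<Sum>q<n. 3 * q + 2) = 3 * n * n + n" for n :: nat
    by (induction n) (auto simp: algebra_simps)
  ultimately show "2 * \<Sum>(abacus3 a b) + a = 3 * a * a + 3 * b * b + b"
    by (simp add: add_mult_distrib2)
qed

definition core3 :: "nat \<Rightarrow> nat \<Rightarrow> nat list" where
  "core3 a b = (THE la. is_partition la \<and> beta_set la = abacus3 a b)"

lemma
  shows is_partition_core3: "is_partition (core3 a b)"
    and beta_set_core3: "beta_set (core3 a b) = abacus3 a b"
proof -
  obtain la where "is_partition la" "beta_set la = abacus3 a b"
    using beta_set_surj[OF finite_abacus3 zero_notin_abacus3] .
  then have "\<exists>!la. is_partition la \<and> beta_set la = abacus3 a b"
    using beta_set_inject by blast
  then have "is_partition (core3 a b) \<and> beta_set (core3 a b) = abacus3 a b"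
    unfolding core3_def by (rule theI')
  then show "is_partition (core3 a b)" "beta_set (core3 a b) = abacus3 a b" by auto
qed

lemma inj_core3: "inj (case_prod core3)"
proof (rule injI, clarsimp)
  fix a b a' b' assume "core3 a b = core3 a' b'"
  then have "abacus3 a b = abacus3 a' b'" using beta_set_core3 by metis
  then have "{q. q < a} = {q. q < a'}" "{q. q < b} = {q. q < b'}"
    using abacus3_mod1_iff abacus3_mod2_iff by blast+
  then show "a = a' \<and> b = b'" by (metis Collect_cong lessThan_def lessThan_eq_iff)
qed

lemma psize_core3: "psize (core3 a b) + a * b = a * a + b * b + b"
proof -
  have "2 * psize (core3 a b) + (a + b) * (a + b) = 2 * \<Sum>(abacus3 a b) + (a + b)"
    using psize_beta_set[OF is_partition_core3] beta_set_core3 card_sum_abacus3(1) by simp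
  then show ?thesis using card_sum_abacus3(2)[of a b] by (simp add: algebra_simps)
qed

lemma cores2_3_eq_image:
  assumes "0 < t"
  shows "cores2 3 t = case_prod core3 ` {(a, b). closed_minus t (abacus3 a b)}"
proof (intro equalityI subsetI)
  fix la assume "la \<in> cores2 3 t"
  then have la: "is_partition la" "closed_minus 3 (beta_set la)" "closed_minus t (beta_set la)"
    using is_core_iff_closed_minus assms unfolding cores2_def is_core_def by auto
  obtain a b where ab: "beta_set la = abacus3 a b"
    using closed_minus_3_eq_abacus3[OF _ zero_notin_beta_set la(2)] la(1)
    by (metis beta_set_def finite_set)
  then have "la = core3 a b"
    using beta_set_inject[OF la(1) is_partition_core3] beta_set_core3 by metis
  then show "la \<in> case_prod core3 ` {(a, b). closed_minus t (abacus3 a b)}"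
    using la(3) ab by auto
next
  fix la assume "la \<in> case_prod core3 ` {(a, b). closed_minus t (abacus3 a b)}"
  then obtain a b where "la = core3 a b" "closed_minus t (abacus3 a b)" by auto
  then show "la \<in> cores2 3 t"
    using is_partition_core3[of a b] beta_set_core3[of a b] is_core_iff_closed_minus assms
      closed_minus_3_abacus3
    unfolding cores2_def by auto
qed

section \<open>Summing over the regions\<close>

definition core3_size :: "nat \<Rightarrow> nat \<Rightarrow> real" where
  "core3_size a b = real a ^ 2 - real a * real b + real b ^ 2 + real b"

lemma psize_core3_real: "real (psize (core3 a b)) = core3_size a b"
  using arg_cong[OF psize_core3[of a b], of real] unfolding core3_size_def
  by (simp add: power2_eq_square algebra_simps)

lemma card_cores2_3:
  "0 < t \<Longrightarrow> card (cores2 3 t) = card {(a, b). closed_minus t (abacus3 a b)}"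
  unfolding cores2_3_eq_image by (rule card_image[OF inj_on_subset[OF inj_core3]]) simp

lemma sum_psize_cores2_3:
  "0 < t \<Longrightarrow> (\<Sum>la\<in>cores2 3 t. real (psize la))
    = (\<Sum>(a, b)\<in>{(a, b). closed_minus t (abacus3 a b)}. core3_size a b)"
  unfolding cores2_3_eq_image
  by (subst sum.reindex[OF inj_on_subset[OF inj_core3]])
    (simp_all add: case_prod_beta psize_core3_real)

lemma sum_core3_size_snd:
  "6 * (\<Sum>b\<le>n. core3_size a b) = 6 * (real n + 1) * real a ^ 2 - 3 * real a * real n * (real n + 1)
    + real n * (real n + 1) * (2 * real n + 1) + 3 * real n * (real n + 1)"
  by (induction n) (simp_all add: core3_size_def algebra_simps power2_eq_square)

lemma sum_core3_size_fst:
  "6 * (\<Sum>a\<le>n. core3_size a b) = real n * (real n + 1) * (2 * real n + 1)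
    - 3 * real b * real n * (real n + 1) + 6 * (real n + 1) * (real b ^ 2 + real b)"
  by (induction n) (simp_all add: core3_size_def algebra_simps power2_eq_square)

lemma sum_core3_size_region1:
  "24 * (\<Sum>a\<le>n. \<Sum>b\<le>a + k. core3_size a b) =
   16 * real k + 24 * real k ^ 2 + 8 * real k ^ 3 + 14 * real n + 38 * real n * real k
   + 30 * real n * real k ^ 2 + 8 * real n * real k ^ 3 + 31 * real n ^ 2 + 30 * real n ^ 2 * real k
   + 6 * real n ^ 2 * real k ^ 2 + 22 * real n ^ 3 + 8 * real n ^ 3 * real k + 5 * real n ^ 4"
proof (induction n)
  case 0
  show ?case using sum_core3_size_snd[of 0 k]
    by (simp add: algebra_simps power2_eq_square power3_eq_cube)
next
  case (Suc n)
  then show ?case using sum_core3_size_snd[of "Suc n" "Suc n + k"]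
    by (simp add: algebra_simps power2_eq_square power3_eq_cube power4_eq_xxxx)
qed

lemma sum_core3_size_region2:
  "24 * (\<Sum>b\<le>n. \<Sum>a\<le>b + k + 1. core3_size a b) =
   24 + 52 * real k + 36 * real k ^ 2 + 8 * real k ^ 3 + 74 * real n + 86 * real n * real k
   + 42 * real n * real k ^ 2 + 8 * real n * real k ^ 3 + 79 * real n ^ 2 + 42 * real n ^ 2 * real k
   + 6 * real n ^ 2 * real k ^ 2 + 34 * real n ^ 3 + 8 * real n ^ 3 * real k + 5 * real n ^ 4"
proof (induction n)
  case 0
  show ?case using sum_core3_size_fst[of 0 "k + 1"]
    by (simp add: algebra_simps power2_eq_square power3_eq_cube)
next
  case (Suc n)
  then show ?case using sum_core3_size_fst[of "Suc n" "Suc n + k + 1"]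
    by (simp add: algebra_simps power2_eq_square power3_eq_cube power4_eq_xxxx)
qed

lemma cores2_3_mod1:
  assumes "t = 3 * k + 1"
  shows "finite (cores2 3 t)" "6 * card (cores2 3 t) = (t + 1) * (t + 2)"
    "72 * (\<Sum>la\<in>cores2 3 t. real (psize la))
      = (real t + 4) * (real t - 1) * (real t + 1) * (real t + 2)"
proof -
  have t: "0 < t" using assms by simp
  have region: "{(a, b). closed_minus t (abacus3 a b)} = Sigma {..k} (\<lambda>a. {..a + k})"
    unfolding assms closed_minus_abacus3_mod1 by auto
  show "finite (cores2 3 t)" using cores2_3_eq_image[OF t] region by simp
  have "2 * (\<Sum>a\<le>n. Suc (a + k)) = (n + 1) * (n + 2 * k + 2)" for n
    by (induction n) (simp_all add: algebra_simps)
  then have "2 * card (cores2 3 t) = (k + 1) * (3 * k + 2)"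
    using card_cores2_3[OF t] region by simp
  then show "6 * card (cores2 3 t) = (t + 1) * (t + 2)"
    unfolding assms by (simp add: algebra_simps)
  have "72 * (\<Sum>la\<in>cores2 3 t. real (psize la))
      = 3 * (24 * (\<Sum>a\<le>k. \<Sum>b\<le>a + k. core3_size a b))"
    unfolding sum_psize_cores2_3[OF t] region by (simp add: sum.Sigma)
  also have "\<dots> = (real t + 4) * (real t - 1) * (real t + 1) * (real t + 2)"
    unfolding sum_core3_size_region1 assms
    by (simp add: algebra_simps power2_eq_square power3_eq_cube power4_eq_xxxx)
  finally show "72 * (\<Sum>la\<in>cores2 3 t. real (psize la))
      = (real t + 4) * (real t - 1) * (real t + 1) * (real t + 2)" .
qed

lemma cores2_3_mod2:
  assumes "t = 3 * k + 2"
  shows "finite (cores2 3 t)" "6 * card (cores2 3 t) = (t + 1) * (t + 2)"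
    "72 * (\<Sum>la\<in>cores2 3 t. real (psize la))
      = (real t + 4) * (real t - 1) * (real t + 1) * (real t + 2)"
proof -
  have t: "0 < t" using assms by simp
  have region: "{(a, b). closed_minus t (abacus3 a b)}
      = prod.swap ` Sigma {..k} (\<lambda>b. {..b + k + 1})"
    unfolding assms closed_minus_abacus3_mod2 by force
  show "finite (cores2 3 t)" using cores2_3_eq_image[OF t] region by simp
  have "2 * (\<Sum>b\<le>n. Suc (Suc (b + k))) = (n + 1) * (n + 2 * k + 4)" for n
    by (induction n) (simp_all add: algebra_simps)
  then have "2 * card (cores2 3 t) = (k + 1) * (3 * k + 4)"
    using card_cores2_3[OF t] region by (simp add: card_image)
  then show "6 * card (cores2 3 t) = (t + 1) * (t + 2)"
    unfolding assms by (simp add: algebra_simps)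
  have "(\<Sum>la\<in>cores2 3 t. real (psize la))
      = (\<Sum>(b, a)\<in>Sigma {..k} (\<lambda>b. {..b + k + 1}). core3_size a b)"
    unfolding sum_psize_cores2_3[OF t] region by (simp add: sum.reindex case_prod_unfold)
  also have "\<dots> = (\<Sum>b\<le>k. \<Sum>a\<le>b + k + 1. core3_size a b)"
    by (rule sum.Sigma[symmetric]) auto
  finally have "72 * (\<Sum>la\<in>cores2 3 t. real (psize la))
      = 3 * (24 * (\<Sum>b\<le>k. \<Sum>a\<le>b + k + 1. core3_size a b))" by simp
  also have "\<dots> = (real t + 4) * (real t - 1) * (real t + 1) * (real t + 2)"
    unfolding sum_core3_size_region2 assms
    by (simp add: algebra_simps power2_eq_square power3_eq_cube power4_eq_xxxx)
  finally show "72 * (\<Sum>la\<in>cores2 3 t. real (psize la))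
      = (real t + 4) * (real t - 1) * (real t + 1) * (real t + 2)" .
qed

lemma real_choose_3: "real ((n + 3) choose 3) = (real n + 3) * (real n + 2) * (real n + 1) / 6"
proof -
  have "real ((n + 3) choose 3) = fact (n + 3) / (fact 3 * fact n)"
    using binomial_fact[of 3 "n + 3"] by simp
  also have "(fact (n + 3) :: real) = (real n + 3) * (real n + 2) * (real n + 1) * fact n"
    by (simp add: numeral_3_eq_3 algebra_simps)
  finally show ?thesis by (simp add: numeral_3_eq_3)
qed

lemma cores2_3_closed_form:
  assumes "\<not> 3 dvd t"
  shows "finite (cores2 3 t)" "6 * card (cores2 3 t) = (t + 1) * (t + 2)"
    "72 * (\<Sum>la\<in>cores2 3 t. real (psize la))
      = (real t + 4) * (real t - 1) * (real t + 1) * (real t + 2)"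
proof -
  have "t mod 3 = 1 \<or> t mod 3 = 2" using assms by presburger
  then obtain k where k: "t = 3 * k + 1 \<or> t = 3 * k + 2"
    using div_mult_mod_eq[of t 3] by (metis mult.commute)
  note mod1 = cores2_3_mod1[of t k] and mod2 = cores2_3_mod2[of t k]
  from k show "finite (cores2 3 t)" using mod1(1) mod2(1) by blast
  from k show "6 * card (cores2 3 t) = (t + 1) * (t + 2)" using mod1(2) mod2(2) by blast
  from k show "72 * (\<Sum>la\<in>cores2 3 t. real (psize la))
      = (real t + 4) * (real t - 1) * (real t + 1) * (real t + 2)"
    using mod1(3) mod2(3) by blast
qed

theorem proposition1p3:
  fixes t :: nat
  assumes "0 < t" and "\<not> 3 dvd t"
  shows "finite (cores2 3 t)
    \<and> (\<Sum>la\<in>cores2 3 t. real (psize la)) / real (card (cores2 3 t))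
        = (real t + 4) * 2 * (real t - 1) / 24
    \<and> (\<Sum>la\<in>cores2 3 t. real (psize la))
        = (real t + 4) * 2 * (real t - 1) / (24 * (real t + 3)) * real ((t + 3) choose 3)"
proof -
  note closed_form = cores2_3_closed_form[OF assms(2)]
  have card: "real (card (cores2 3 t)) = (real t + 1) * (real t + 2) / 6"
    using arg_cong[OF closed_form(2), of real] by (simp add: algebra_simps)
  have sum: "(\<Sum>la\<in>cores2 3 t. real (psize la))
      = (real t + 4) * (real t - 1) * (real t + 1) * (real t + 2) / 72"
    using closed_form(3) by simp
  have "real (card (cores2 3 t)) \<noteq> 0" using closed_form(2) by auto
  moreover have "(\<Sum>la\<in>cores2 3 t. real (psize la))
      = (real t + 4) * 2 * (real t - 1) / 24 * real (card (cores2 3 t))"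
    unfolding sum card by (simp add: field_simps)
  ultimately have "(\<Sum>la\<in>cores2 3 t. real (psize la)) / real (card (cores2 3 t))
      = (real t + 4) * 2 * (real t - 1) / 24"
    by simp
  moreover have "(\<Sum>la\<in>cores2 3 t. real (psize la))
      = (real t + 4) * 2 * (real t - 1) / (24 * (real t + 3)) * real ((t + 3) choose 3)"
    unfolding sum real_choose_3 by (simp add: field_simps)
  ultimately show ?thesis using closed_form(1) by blast
qed

end
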